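(* The metrics $DID$ and $DIR$ satisfy intra-group fairness, while $DTD$ and $DTR$ do not. Here $m$ satisfies intra-group fairness if for every population $\mathcal D$, candidate set $D\subseteq\mathcal D$, ranking $r$ of $D$ and positions $i<j$ with $y(r(i))<y(r(j))$, one has $m(r_{i\leftrightarrow j})>m(r)$ whenever $r(i),r(j)\in G_1$, and $m(r_{i\leftrightarrow j})<m(r)$ whenever $r(i),r(j)\in G_0$.
   Context: A population is a finite set $\mathcal{D}$ of candidates partitioned into two nonempty groups, a non-protected group $G_0$ and a protected group $G_1$; each candidate $d$ has a relevance score $y(d)\in\mathbb R$. For a candidate set $D\subseteq\mathcal D$ with $n=|D|$, a ranking is a bijection $r:\{1,\dots,n\}\to D$ and $r^{-1}(d)$ is the position of $d$; $r_{i\leftrightarrow j}$ is $r$ with the candidates at positions $i$ and $j$ swapped. Position bias $b(k)=1/\log_2(k+1)$. For $G\in\{G_0,G_1\}$: $\mathrm{Exposure}(G|r)=\frac{1}{|G|}\sum_{d\in G\cap D} b(r^{-1}(d))$, $Y(G)=\frac1{|G|}\sum_{d\in G}y(d)$, $CTR(G|r)=\frac1{|G|}\sum_{d\in G\cap D} b(r^{-1}(d))\,y(d)$ ($|G|$ is the group size in the whole population). $DTD(r)=\frac{\mathrm{Exposure}(G_1|r)}{Y(G_1)}-\frac{\mathrm{Exposure}(G_0|r)}{Y(G_0)}$, $DTR(r)=\frac{\mathrm{Exposure}(G_1|r)}{\mathrm{Exposure}(G_0|r)}\cdot\frac{Y(G_0)}{Y(G_1)}$, $DID(r)=\frac{CTR(G_1|r)}{Y(G_1)}-\frac{CTR(G_0|r)}{Y(G_0)}$,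 $DIR(r)=\frac{CTR(G_1|r)}{CTR(G_0|r)}\cdot\frac{Y(G_0)}{Y(G_1)}$. *)

theory Defs
  imports Complex_Main
begin

text \<open>A population is given by two disjoint finite
nonempty groups G0 (non-protected) and G1 (protected); the population is their union.
y assigns relevance scores.\<close>

definition bias :: "nat \<Rightarrow> real" where
  "bias k = 1 / log 2 (real k + 1)"

definition is_ranking :: "nat set \<Rightarrow> (nat \<Rightarrow> nat) \<Rightarrow> bool" where
  "is_ranking D r \<longleftrightarrow> finite D \<and> bij_betw r {1..card D} D"

definition pos :: "nat set \<Rightarrow> (nat \<Rightarrow> nat) \<Rightarrow> nat \<Rightarrow> nat" where
  "pos D r d = inv_into {1..card D} r d"

definition swap_pos :: "(nat \<Rightarrow> nat) \<Rightarrow> nat \<Rightarrow> nat \<Rightarrow> (nat \<Rightarrow> nat)" where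
  "swap_pos r i j = (\<lambda>k. if k = i then r j else if k = j then r i else r k)"

definition exposure :: "nat set \<Rightarrow> nat set \<Rightarrow> (nat \<Rightarrow> nat) \<Rightarrow> real" where
  "exposure G D r = (\<Sum>d\<in>G \<inter> D. bias (pos D r d)) / real (card G)"

definition Yavg :: "nat set \<Rightarrow> (nat \<Rightarrow> real) \<Rightarrow> real" where
  "Yavg G y = (\<Sum>d\<in>G. y d) / real (card G)"

definition ctr :: "nat set \<Rightarrow> (nat \<Rightarrow> real) \<Rightarrow> nat set \<Rightarrow> (nat \<Rightarrow> nat) \<Rightarrow> real" where
  "ctr G y D r = (\<Sum>d\<in>G \<inter> D. bias (pos D r d) * y d) / real (card G)"

type_synonym metric = "nat set \<Rightarrow> nat set \<Rightarrow> (nat \<Rightarrow> real) \<Rightarrow> nat set \<Rightarrow> (nat \<Rightarrow> nat) \<Rightarrow> real"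

definition DTD :: metric where
  "DTD G0 G1 y D r = exposure G1 D r / Yavg G1 y - exposure G0 D r / Yavg G0 y"

definition DTR :: metric where
  "DTR G0 G1 y D r = (exposure G1 D r / exposure G0 D r) * (Yavg G0 y / Yavg G1 y)"

definition DID :: metric where
  "DID G0 G1 y D r = ctr G1 y D r / Yavg G1 y - ctr G0 y D r / Yavg G0 y"

definition DIR :: metric where
  "DIR G0 G1 y D r = (ctr G1 y D r / ctr G0 y D r) * (Yavg G0 y / Yavg G1 y)"

text \<open>Standing assumptions on a population and candidate set under which all four
metrics are well defined (all denominators positive): groups finite, nonempty,
disjoint; relevance scores positive; D contains candidates of both groups.\<close>
definition admissible :: "nat set \<Rightarrow> nat set \<Rightarrow> (nat \<Rightarrow> real) \<Rightarrow> nat set \<Rightarrow> bool" where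
  "admissible G0 G1 y D \<longleftrightarrow>
     finite G0 \<and> finite G1 \<and> G0 \<noteq> {} \<and> G1 \<noteq> {} \<and> G0 \<inter> G1 = {} \<and>
     (\<forall>d\<in>G0 \<union> G1. y d > 0) \<and>
     D \<subseteq> G0 \<union> G1 \<and> D \<inter> G0 \<noteq> {} \<and> D \<inter> G1 \<noteq> {}"

definition intra_group_fair :: "metric \<Rightarrow> bool" where
  "intra_group_fair m \<longleftrightarrow>
    (\<forall>G0 G1 y D r i j.
       admissible G0 G1 y D \<and> is_ranking D r \<and>
       1 \<le> i \<and> i < j \<and> j \<le> card D \<and> y (r i) < y (r j) \<longrightarrow>
         (r i \<in> G1 \<and> r j \<in> G1 \<longrightarrow> m G0 G1 y D (swap_pos r i j) > m G0 G1 y D r) \<and>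
         (r i \<in> G0 \<and> r j \<in> G0 \<longrightarrow> m G0 G1 y D (swap_pos r i j) < m G0 G1 y D r))"

end

theory Submission
  imports Defs "HOL-Combinatorics.Transposition"
begin

text \<open>Swapping the candidates at positions \<open>i < j\<close> changes the position of only
these two candidates, so it changes a bias-weighted sum \<open>\<Sum> bias(pos d) * w d\<close> over a
group by \<open>(bias i - bias j) * (w (r j) - w (r i))\<close> if both lie in the group and not at all
if neither does. Since the bias is strictly decreasing, moving the more relevant of two
protected candidates up strictly raises \<open>CTR(G\<^sub>1)\<close> and leaves \<open>CTR(G\<^sub>0)\<close> unchanged,
so \<open>DID\<close> and \<open>DIR\<close> increase; symmetrically they decrease for \<open>G\<^sub>0\<close>. Exposure is the
case \<open>w = 1\<close>, which such a swap never changes, so \<open>DTD\<close> and \<open>DTR\<close> stay constant on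
any instance with two protected candidates of different relevance.\<close>

lemma bias_pos: "0 < k \<Longrightarrow> 0 < bias k"
  unfolding bias_def by simp

lemma bias_strict_antimono:
  assumes "0 < i" "i < j"
  shows "bias j < bias i"
  unfolding bias_def using assms by (simp add: divide_strict_left_mono)

lemma swap_pos_eq_comp_transpose: "swap_pos r i j = r \<circ> transpose i j"
  by (simp add: fun_eq_iff swap_pos_def transpose_def)

lemma is_ranking_swap_pos:
  assumes "is_ranking D r" "i \<in> {1..card D}" "j \<in> {1..card D}"
  shows "is_ranking D (swap_pos r i j)"
  using assms by (simp add: is_ranking_def swap_pos_eq_comp_transpose bij_betw_swap_iff)

lemma pos_eqI:
  assumes "is_ranking D r" "k \<in> {1..card D}" "r k = d"
  shows "pos D r d = k"
  using assms unfolding is_ranking_def pos_def by (metis bij_betw_imp_inj_on inv_into_f_f)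

lemma pos_in_positions:
  assumes "is_ranking D r" "d \<in> D"
  shows "pos D r d \<in> {1..card D}"
  using assms unfolding is_ranking_def pos_def by (metis bij_betw_def inv_into_into)

lemma ranking_pos:
  assumes "is_ranking D r" "d \<in> D"
  shows "r (pos D r d) = d"
  using assms unfolding is_ranking_def pos_def by (metis bij_betw_def f_inv_into_f)

lemma pos_swap_pos:
  assumes R: "is_ranking D r" and ij: "i \<in> {1..card D}" "j \<in> {1..card D}" and d: "d \<in> D"
  shows "pos D (swap_pos r i j) d = (if d = r i then j else if d = r j then i else pos D r d)"
proof -
  have R': "is_ranking D (swap_pos r i j)" using is_ranking_swap_pos[OF R ij] .
  consider "d = r i" | "d \<noteq> r i" "d = r j" | "d \<noteq> r i" "d \<noteq> r j" by blast
  then show ?thesis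
  proof cases
    case 1
    have "swap_pos r i j j = d" using 1 by (simp add: swap_pos_def)
    then show ?thesis using 1 pos_eqI[OF R' ij(2)] by simp
  next
    case 2
    have "swap_pos r i j i = d" using 2 by (simp add: swap_pos_def)
    then show ?thesis using 2 pos_eqI[OF R' ij(1)] by simp
  next
    case 3
    let ?k = "pos D r d"
    have "r ?k = d" using ranking_pos[OF R d] .
    then have "?k \<noteq> i" "?k \<noteq> j" and "swap_pos r i j ?k = d"
      using 3 by (auto simp: swap_pos_def)
    then show ?thesis using 3 pos_eqI[OF R' pos_in_positions[OF R d]] by simp
  qed
qed

lemma sum_bias_swap_pos_within:
  fixes w :: "nat \<Rightarrow> real"
  assumes R: "is_ranking D r" and ij: "i \<in> {1..card D}" "j \<in> {1..card D}" "i \<noteq> j"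
    and G: "r i \<in> G" "r j \<in> G"
  shows "(\<Sum>d\<in>G \<inter> D. bias (pos D (swap_pos r i j) d) * w d) =
         (\<Sum>d\<in>G \<inter> D. bias (pos D r d) * w d) + (bias i - bias j) * (w (r j) - w (r i))"
proof -
  have "finite D" and bij: "bij_betw r {1..card D} D" using R by (auto simp: is_ranking_def)
  have rD: "r i \<in> D" "r j \<in> D" using bij ij by (auto dest: bij_betw_apply)
  have "r i \<noteq> r j" using bij ij by (metis bij_betw_imp_inj_on inj_on_contraD)
  then have GD: "G \<inter> D = insert (r i) (insert (r j) (G \<inter> D - {r i, r j}))"
    and fin: "finite (G \<inter> D - {r i, r j})" "r i \<notin> insert (r j) (G \<inter> D - {r i, r j})"
    using G rD \<open>finite D\<close> by auto
  have pos_r: "pos D r (r i) = i" "pos D r (r j) = j" using pos_eqI[OF R] ij by auto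
  have rest: "(\<Sum>d\<in>G \<inter> D - {r i, r j}. bias (pos D (swap_pos r i j) d) * w d) =
              (\<Sum>d\<in>G \<inter> D - {r i, r j}. bias (pos D r d) * w d)"
    by (rule sum.cong) (auto simp: pos_swap_pos[OF R ij(1,2)])
  show ?thesis
    apply (subst (1 2) GD)
    using fin rest pos_r \<open>r i \<noteq> r j\<close> pos_swap_pos[OF R ij(1,2) rD(1)] pos_swap_pos[OF R ij(1,2) rD(2)]
    by (simp add: algebra_simps)
qed

lemma sum_bias_swap_pos_outside:
  assumes "is_ranking D r" "i \<in> {1..card D}" "j \<in> {1..card D}" "r i \<notin> G" "r j \<notin> G"
  shows "(\<Sum>d\<in>G \<inter> D. bias (pos D (swap_pos r i j) d) * w d) =
         (\<Sum>d\<in>G \<inter> D. bias (pos D r d) * w d)"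
  using assms by (intro sum.cong) (auto simp: pos_swap_pos)

lemma ctr_swap_pos_within:
  assumes "is_ranking D r" "i \<in> {1..card D}" "j \<in> {1..card D}" "i \<noteq> j" "r i \<in> G" "r j \<in> G"
  shows "ctr G y D (swap_pos r i j) =
         ctr G y D r + (bias i - bias j) * (y (r j) - y (r i)) / real (card G)"
  unfolding ctr_def sum_bias_swap_pos_within[OF assms] by (simp add: add_divide_distrib)

lemma ctr_swap_pos_outside:
  assumes "is_ranking D r" "i \<in> {1..card D}" "j \<in> {1..card D}" "r i \<notin> G" "r j \<notin> G"
  shows "ctr G y D (swap_pos r i j) = ctr G y D r"
  unfolding ctr_def sum_bias_swap_pos_outside[OF assms] ..

lemma ctr_swap_pos_less:
  assumes R: "is_ranking D r" and ij: "0 < i" "i < j" "j \<le> card D"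
    and y: "y (r i) < y (r j)" and G: "finite G" "r i \<in> G" "r j \<in> G"
  shows "ctr G y D r < ctr G y D (swap_pos r i j)"
proof -
  have "0 < (bias i - bias j) * (y (r j) - y (r i))"
    using bias_strict_antimono[OF ij(1,2)] y by simp
  moreover have "0 < card G" using G by (auto simp: card_gt_0_iff)
  ultimately show ?thesis using ij by (simp add: ctr_swap_pos_within[OF R _ _ _ G(2,3)])
qed

lemma exposure_swap_pos:
  assumes R: "is_ranking D r" and ij: "i \<in> {1..card D}" "j \<in> {1..card D}"
    and G: "r i \<in> G \<longleftrightarrow> r j \<in> G"
  shows "exposure G D (swap_pos r i j) = exposure G D r"
proof (cases "i = j")
  case True
  then show ?thesis by (simp add: swap_pos_eq_comp_transpose)
next
  case False
  then show ?thesis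
    using G sum_bias_swap_pos_within[OF R ij False, of G "\<lambda>_. 1"]
      sum_bias_swap_pos_outside[OF R ij, of G "\<lambda>_. 1"]
    by (cases "r i \<in> G") (simp_all add: exposure_def)
qed

lemma Yavg_pos:
  assumes "finite G" "G \<noteq> {}" "\<forall>d\<in>G. 0 < y d"
  shows "0 < Yavg G y"
  unfolding Yavg_def using assms by (simp add: sum_pos card_gt_0_iff)

lemma ctr_pos:
  assumes R: "is_ranking D r" and G: "finite G" "G \<inter> D \<noteq> {}" "\<forall>d\<in>G. 0 < y d"
  shows "0 < ctr G y D r"
proof -
  have term_pos: "0 < bias (pos D r d) * y d" if "d \<in> G \<inter> D" for d
  proof (rule mult_pos_pos)
    have "pos D r d \<in> {1..card D}" using that pos_in_positions[OF R] by simp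
    then show "0 < bias (pos D r d)" by (simp add: bias_pos)
    show "0 < y d" using that G by simp
  qed
  have "finite (G \<inter> D)" using G by simp
  then have "0 < (\<Sum>d\<in>G \<inter> D. bias (pos D r d) * y d)" using G(2) term_pos by (rule sum_pos)
  moreover have "0 < card G" using G by (auto simp: card_gt_0_iff)
  ultimately show ?thesis unfolding ctr_def by simp
qed

lemma admissible_Yavg_pos:
  assumes "admissible G0 G1 y D"
  shows "0 < Yavg G0 y" "0 < Yavg G1 y"
  using assms unfolding admissible_def by (simp_all add: Yavg_pos)

lemma admissible_ctr_pos:
  assumes "admissible G0 G1 y D" "is_ranking D r"
  shows "0 < ctr G0 y D r" "0 < ctr G1 y D r"
  using assms unfolding admissible_def by (simp_all add: ctr_pos Int_commute)

lemma intra_group_fair_if_monotone_in_ctr: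
  assumes up: "\<And>G0 G1 y D r r'. admissible G0 G1 y D \<Longrightarrow> is_ranking D r \<Longrightarrow>
      is_ranking D r' \<Longrightarrow> ctr G0 y D r' = ctr G0 y D r \<Longrightarrow> ctr G1 y D r < ctr G1 y D r' \<Longrightarrow>
      m G0 G1 y D r < m G0 G1 y D r'"
    and down: "\<And>G0 G1 y D r r'. admissible G0 G1 y D \<Longrightarrow> is_ranking D r \<Longrightarrow>
      is_ranking D r' \<Longrightarrow> ctr G1 y D r' = ctr G1 y D r \<Longrightarrow> ctr G0 y D r < ctr G0 y D r' \<Longrightarrow>
      m G0 G1 y D r' < m G0 G1 y D r"
  shows "intra_group_fair m"
  unfolding intra_group_fair_def
proof (intro allI impI conjI)
  fix G0 G1 y D r i j
  assume "admissible G0 G1 y D \<and> is_ranking D r \<and> 1 \<le> i \<and> i < j \<and> j \<le> card D \<and> y (r i) < y (r j)"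
  then have A: "admissible G0 G1 y D" and R: "is_ranking D r"
    and ij: "0 < i" "i < j" "j \<le> card D" "i \<in> {1..card D}" "j \<in> {1..card D}"
    and y: "y (r i) < y (r j)"
    by auto
  have R': "is_ranking D (swap_pos r i j)" using is_ranking_swap_pos[OF R ij(4,5)] .
  have fin: "finite G0" "finite G1" and disj: "G0 \<inter> G1 = {}"
    using A by (auto simp: admissible_def)
  show "m G0 G1 y D r < m G0 G1 y D (swap_pos r i j)" if "r i \<in> G1 \<and> r j \<in> G1"
    using that disj up[OF A R R' ctr_swap_pos_outside[OF R ij(4,5)]
        ctr_swap_pos_less[OF R ij(1-3) y fin(2)]]
    by blast
  show "m G0 G1 y D (swap_pos r i j) < m G0 G1 y D r" if "r i \<in> G0 \<and> r j \<in> G0"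
    using that disj down[OF A R R' ctr_swap_pos_outside[OF R ij(4,5)]
        ctr_swap_pos_less[OF R ij(1-3) y fin(1)]]
    by blast
qed

lemma intra_group_fair_DID: "intra_group_fair DID"
proof (rule intra_group_fair_if_monotone_in_ctr)
  fix G0 G1 y D r r'
  assume A: "admissible G0 G1 y D"
  note Y = admissible_Yavg_pos[OF A]
  show "DID G0 G1 y D r < DID G0 G1 y D r'"
    if "ctr G0 y D r' = ctr G0 y D r" "ctr G1 y D r < ctr G1 y D r'"
    using that Y unfolding DID_def by (simp add: divide_strict_right_mono)
  show "DID G0 G1 y D r' < DID G0 G1 y D r"
    if "ctr G1 y D r' = ctr G1 y D r" "ctr G0 y D r < ctr G0 y D r'"
    using that Y unfolding DID_def by (simp add: divide_strict_right_mono)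
qed

lemma intra_group_fair_DIR: "intra_group_fair DIR"
proof (rule intra_group_fair_if_monotone_in_ctr)
  fix G0 G1 y D r r'
  assume A: "admissible G0 G1 y D" and R: "is_ranking D r"
  have Y: "0 < Yavg G0 y / Yavg G1 y" using admissible_Yavg_pos[OF A] by simp
  note C = admissible_ctr_pos[OF A R]
  show "DIR G0 G1 y D r < DIR G0 G1 y D r'"
    if "ctr G0 y D r' = ctr G0 y D r" "ctr G1 y D r < ctr G1 y D r'"
    using that C Y unfolding DIR_def that(1)
    by (intro mult_strict_right_mono divide_strict_right_mono) simp_all
  show "DIR G0 G1 y D r' < DIR G0 G1 y D r"
    if "ctr G1 y D r' = ctr G1 y D r" "ctr G0 y D r < ctr G0 y D r'"
    using that C Y unfolding DIR_def that(1)
    by (intro mult_strict_right_mono divide_strict_left_mono) simp_all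
qed

lemma not_intra_group_fair_if_protected_swap_invariant:
  assumes invariant: "\<And>G0 G1 y D r i j. admissible G0 G1 y D \<Longrightarrow> is_ranking D r \<Longrightarrow>
      i \<in> {1..card D} \<Longrightarrow> j \<in> {1..card D} \<Longrightarrow> i \<noteq> j \<Longrightarrow> r i \<in> G1 \<Longrightarrow> r j \<in> G1 \<Longrightarrow>
      m G0 G1 y D (swap_pos r i j) = m G0 G1 y D r"
  shows "\<not> intra_group_fair m"
proof
  let ?D = "{1, 2, 3} :: nat set"
  have A: "admissible {3} {1, 2} real ?D" by (auto simp: admissible_def)
  have card: "card ?D = 3" by simp
  have positions: "{1..card ?D} = ?D" by auto
  have R: "is_ranking ?D id" unfolding is_ranking_def positions by simp
  assume "intra_group_fair m"
  then have "m {3} {1, 2} real ?D id < m {3} {1, 2} real ?D (swap_pos id 1 2)"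
    using A R card unfolding intra_group_fair_def
    by (elim allE[where x = "{3}"] allE[where x = "{1, 2}"] allE[where x = real] allE[where x = ?D]
        allE[where x = id] allE[where x = 1] allE[where x = 2]) (simp add: swap_pos_def)
  moreover have "m {3} {1, 2} real ?D (swap_pos id 1 2) = m {3} {1, 2} real ?D id"
    using invariant[OF A R, of 1 2] card by simp
  ultimately show False by simp
qed

lemma exposures_swap_pos_protected:
  assumes "admissible G0 G1 y D" "is_ranking D r" "i \<in> {1..card D}" "j \<in> {1..card D}"
    "r i \<in> G1" "r j \<in> G1"
  shows "exposure G0 D (swap_pos r i j) = exposure G0 D r"
    "exposure G1 D (swap_pos r i j) = exposure G1 D r"
proof -
  have "G0 \<inter> G1 = {}" using assms(1) by (simp add: admissible_def)
  then have "r i \<notin> G0" "r j \<notin> G0" using assms(5,6) by auto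
  then show "exposure G0 D (swap_pos r i j) = exposure G0 D r"
    "exposure G1 D (swap_pos r i j) = exposure G1 D r"
    using exposure_swap_pos[OF assms(2-4)] assms(5,6) by simp_all
qed

lemma not_intra_group_fair_DTD: "\<not> intra_group_fair DTD"
  by (rule not_intra_group_fair_if_protected_swap_invariant)
    (simp only: DTD_def exposures_swap_pos_protected)

lemma not_intra_group_fair_DTR: "\<not> intra_group_fair DTR"
  by (rule not_intra_group_fair_if_protected_swap_invariant)
    (simp only: DTR_def exposures_swap_pos_protected)

theorem theorem5:
  shows "intra_group_fair DID \<and> intra_group_fair DIR \<and>
         \<not> intra_group_fair DTD \<and> \<not> intra_group_fair DTR"
  using intra_group_fair_DID intra_group_fair_DIR not_intra_group_fair_DTD not_intra_group_fair_DTR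
  by blast

end
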